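(* Let $i,j\ge 0$ be real numbers with $i+j=1$ and let $\psi$ be an approximating function with $\sum_{r=1}^\infty\psi(r)=\infty$. Then for Lebesgue-almost every irrational vector $\mathbf{x}\in[0,1]^2$ we have $\mu\big(\mathbf{W}^{\mathbf{x}}_{(i,j)}(\psi)\big)=1$.
   Context: $\|\cdot\|$ denotes the distance to the nearest integer. Convention: if $i=0$ then $\|y\|^{1/i}:=0$ (and likewise for $j$). A vector $\mathbf{x}=(x_1,x_2)$ is irrational if $1,x_1,x_2$ are linearly independent over $\mathbb{Q}$. $\mu$ denotes two-dimensional Lebesgue measure on $[0,1]^2$. An approximating function is a strictly positive non-increasing map $\psi:\mathbb{N}\to\mathbb{R}$. For an approximating function $\psi$ and irrational $\mathbf{x}\in[0,1]^2$, $\mathbf{W}^{\mathbf{x}}_{(i,j)}(\psi)$ is the set of $\boldsymbol\gamma=(\gamma_1,\gamma_2)\in[0,1]^2$ such that $\max\{\|qx_1-\gamma_1\|^{1/i},\|qx_2-\gamma_2\|^{1/j}\}\le\psi(|q|)$ for infinitely many nonzero integers $q$. *)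

theory Defs
  imports "HOL-Analysis.Analysis"
begin

definition dist_int :: "real \<Rightarrow> real" where
  "dist_int y = \<bar>y - of_int (round y)\<bar>"

text \<open>The quantity \<open>\<parallel>y\<parallel>^(1/i)\<close>, with the convention that it is 0 when i = 0.\<close>
definition wpow :: "real \<Rightarrow> real \<Rightarrow> real" where
  "wpow y i = (if i = 0 then 0 else dist_int y powr (1 / i))"

definition irrational_vec :: "real \<times> real \<Rightarrow> bool" where
  "irrational_vec x \<longleftrightarrow>
     (\<forall>a b c :: rat. of_rat a + of_rat b * fst x + of_rat c * snd x = 0 \<longrightarrow>
        a = 0 \<and> b = 0 \<and> c = 0)"

definition approx_fun :: "(nat \<Rightarrow> real) \<Rightarrow> bool" where
  "approx_fun \<psi> \<longleftrightarrow> (\<forall>n\<ge>1. \<psi> n > 0) \<and> (\<forall>m n. 1 \<le> m \<longrightarrow> m \<le> n \<longrightarrow> \<psi> n \<le> \<psi> m)"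

definition W_set :: "real \<times> real \<Rightarrow> real \<Rightarrow> real \<Rightarrow> (nat \<Rightarrow> real) \<Rightarrow> (real \<times> real) set" where
  "W_set x i j \<psi> = {\<gamma> \<in> {0..1} \<times> {0..1}.
     infinite {q :: int. q \<noteq> 0 \<and>
       max (wpow (of_int q * fst x - fst \<gamma>) i) (wpow (of_int q * snd x - snd \<gamma>) j)
         \<le> \<psi> (nat \<bar>q\<bar>)}}"

end

theory Submission
  imports Defs "HOL-Probability.Probability_Measure"
begin

(* Regard the pair (x, gamma) as a random point of the four-dimensional unit cube
   [0,1]^2 x [0,1]^2 with Lebesgue measure.  For q >= 1 let A_q be the event
     ||q x1 - gamma1|| <= a_q  and  ||q x2 - gamma2|| <= b_q,
   with a_q = min(1/2, psi(q)^i) and b_q = min(1/2, psi(q)^j).  Integrating first in gamma and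
   using the 1-periodicity of the distance to the nearest integer, P(A_q) = 4 a_q b_q, and for
   q <> r the integral over x of the correlation of the two targets is the product of their
   masses, so the events A_q are pairwise independent.  Since i + j = 1, 4 a_q b_q >= min(1, psi(q)),
   hence sum P(A_q) diverges and the second-moment (Chung-Erdos) form of the Borel-Cantelli lemma
   shows that almost every (x, gamma) lies in infinitely many A_q.  By Fubini, for almost every x
   almost every gamma does, and every such gamma belongs to W^x_(i,j)(psi). *)


lemma dist_int_le: "dist_int y \<le> \<bar>y - of_int n\<bar>"
  unfolding dist_int_def by (rule round_diff_minimal)

lemma dist_int_nonneg: "dist_int y \<ge> 0"
  unfolding dist_int_def by simp

lemma dist_int_le_iff: "dist_int y \<le> a \<longleftrightarrow> (\<exists>n::int. \<bar>y - of_int n\<bar> \<le> a)"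
  using dist_int_le[of y] unfolding dist_int_def by (meson order_trans)

lemma dist_int_shift: "dist_int (y + of_int n) = dist_int y"
proof (rule antisym)
  show "dist_int (y + of_int n) \<le> dist_int y"
    using dist_int_le[of "y + of_int n" "round y + n"] unfolding dist_int_def by simp
  show "dist_int y \<le> dist_int (y + of_int n)"
    using dist_int_le[of y "round (y + of_int n) - n"] unfolding dist_int_def by simp
qed

lemma dist_int_minus: "dist_int (- y) = dist_int y"
proof (rule antisym)
  show "dist_int (- y) \<le> dist_int y"
    using dist_int_le[of "- y" "- round y"] unfolding dist_int_def by simp
  show "dist_int y \<le> dist_int (- y)"
    using dist_int_le[of y "- round (- y)"] unfolding dist_int_def by simp
qed

lemma borel_measurable_dist_int[measurable]: "dist_int \<in> borel_measurable borel"
proof -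
  have eq: "dist_int = (\<lambda>y. \<bar>y - real_of_int \<lfloor>y + 1/2\<rfloor>\<bar>)"
    by (auto simp: dist_int_def round_def fun_eq_iff)
  show ?thesis unfolding eq by measurable
qed


definition unit_periodic :: "(real \<Rightarrow> 'a) \<Rightarrow> bool" where
  "unit_periodic f \<longleftrightarrow> (\<forall>x. f (x + 1) = f x)"

lemma unit_periodic_nat:
  assumes "unit_periodic f" shows "f (x + of_nat n) = f x"
proof (induction n)
  case (Suc n)
  have "f (x + of_nat (Suc n)) = f ((x + of_nat n) + 1)" by (simp add: algebra_simps)
  also have "\<dots> = f (x + of_nat n)" using assms by (simp add: unit_periodic_def)
  finally show ?case using Suc by simp
qed simp

lemma unit_periodic_int:
  assumes "unit_periodic f" shows "f (x + of_int n) = f x"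
proof (cases "n \<ge> 0")
  case True
  then obtain m where "n = int m" by (metis nonneg_int_cases)
  then show ?thesis using unit_periodic_nat[OF assms] by simp
next
  case False
  then obtain m where m: "n = - int m" by (metis nonpos_int_cases linorder_le_cases)
  have "f ((x - of_nat m) + of_nat m) = f (x - of_nat m)" by (rule unit_periodic_nat[OF assms])
  then show ?thesis using m by simp
qed

lemma nn_integral_lborel_translate:
  fixes f :: "real \<Rightarrow> ennreal"
  assumes [measurable]: "f \<in> borel_measurable borel"
  shows "(\<integral>\<^sup>+x. f (x + c) \<partial>lborel) = (\<integral>\<^sup>+x. f x \<partial>lborel)"
  using nn_integral_real_affine[of f 1 c] by (simp add: add.commute)

text \<open>The integral of a periodic function over a period does not see a translation: split
  the shifted period at the integer it straddles and move one piece back by 1.\<close>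

lemma nn_integral_period_translate:
  fixes f :: "real \<Rightarrow> ennreal"
  assumes [measurable]: "f \<in> borel_measurable borel" and per: "unit_periodic f"
  shows "(\<integral>\<^sup>+\<gamma>. indicator {0..<1} \<gamma> * f (\<gamma> + s) \<partial>lborel)
       = (\<integral>\<^sup>+\<gamma>. indicator {0..<1} \<gamma> * f \<gamma> \<partial>lborel)"
proof -
  define \<theta> where "\<theta> = s - of_int \<lfloor>s\<rfloor>"
  have th0: "0 \<le> \<theta>" and th1: "\<theta> < 1"
    unfolding \<theta>_def by (simp_all add: floor_less_cancel)
  have fs: "f (\<gamma> + s) = f (\<gamma> + \<theta>)" for \<gamma>
    using unit_periodic_int[OF per, of "\<gamma> + \<theta>" "\<lfloor>s\<rfloor>"] by (simp add: \<theta>_def)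
  have "(\<integral>\<^sup>+\<gamma>. indicator {0..<1} \<gamma> * f (\<gamma> + s) \<partial>lborel)
      = (\<integral>\<^sup>+\<gamma>. indicator {0..<1} ((\<gamma> + \<theta>) - \<theta>) * f (\<gamma> + \<theta>) \<partial>lborel)"
    by (simp add: fs)
  also have "\<dots> = (\<integral>\<^sup>+y. indicator {0..<1} (y - \<theta>) * f y \<partial>lborel)"
    by (rule nn_integral_lborel_translate[where f = "\<lambda>y. indicator {0..<1} (y - \<theta>) * f y"]) measurable
  also have "\<dots> = (\<integral>\<^sup>+y. indicator {\<theta>..<1} y * f y + indicator {1..<1+\<theta>} y * f y \<partial>lborel)"
    using th0 th1 by (intro nn_integral_cong) (auto simp: indicator_def)
  also have "\<dots> = (\<integral>\<^sup>+y. indicator {\<theta>..<1} y * f y \<partial>lborel) + (\<integral>\<^sup>+y. indicator {1..<1+\<theta>} y * f y \<partial>lborel)"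
    by (rule nn_integral_add) measurable
  also have "(\<integral>\<^sup>+y. indicator {1..<1+\<theta>} y * f y \<partial>lborel)
      = (\<integral>\<^sup>+y. indicator {1..<1+\<theta>} (y + 1) * f (y + 1) \<partial>lborel)"
    by (rule nn_integral_lborel_translate[symmetric]) measurable
  also have "\<dots> = (\<integral>\<^sup>+y. indicator {0..<\<theta>} y * f y \<partial>lborel)"
    using per by (intro nn_integral_cong) (auto simp: indicator_def unit_periodic_def)
  also have "(\<integral>\<^sup>+y. indicator {\<theta>..<1} y * f y \<partial>lborel) + (\<integral>\<^sup>+y. indicator {0..<\<theta>} y * f y \<partial>lborel)
      = (\<integral>\<^sup>+y. indicator {\<theta>..<1} y * f y + indicator {0..<\<theta>} y * f y \<partial>lborel)"
    by (rule nn_integral_add[symmetric]) measurable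
  also have "\<dots> = (\<integral>\<^sup>+\<gamma>. indicator {0..<1} \<gamma> * f \<gamma> \<partial>lborel)"
    using th0 th1 by (intro nn_integral_cong) (auto simp: indicator_def)
  finally show ?thesis .
qed

lemma nn_integral_periods:
  fixes f :: "real \<Rightarrow> ennreal"
  assumes [measurable]: "f \<in> borel_measurable borel" and per: "unit_periodic f"
  shows "(\<integral>\<^sup>+x. indicator {0..<real n} x * f x \<partial>lborel)
       = of_nat n * (\<integral>\<^sup>+x. indicator {0..<1} x * f x \<partial>lborel)"
proof (induction n)
  case (Suc n)
  have "(\<integral>\<^sup>+x. indicator {0..<real (Suc n)} x * f x \<partial>lborel)
      = (\<integral>\<^sup>+x. indicator {0..<real n} x * f x + indicator {real n..<real n + 1} x * f x \<partial>lborel)"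
    by (intro nn_integral_cong) (auto simp: indicator_def)
  also have "\<dots> = (\<integral>\<^sup>+x. indicator {0..<real n} x * f x \<partial>lborel) + (\<integral>\<^sup>+x. indicator {real n..<real n + 1} x * f x \<partial>lborel)"
    by (rule nn_integral_add) measurable
  also have "(\<integral>\<^sup>+x. indicator {real n..<real n + 1} x * f x \<partial>lborel)
      = (\<integral>\<^sup>+x. indicator {real n..<real n + 1} (x + real n) * f (x + real n) \<partial>lborel)"
    by (rule nn_integral_lborel_translate[symmetric]) measurable
  also have "\<dots> = (\<integral>\<^sup>+x. indicator {0..<1} x * f x \<partial>lborel)"
    using unit_periodic_nat[OF per] by (intro nn_integral_cong) (auto simp: indicator_def)
  finally show ?case using Suc by (simp add: distrib_right)
qed simp

text \<open>The integral over a period is also invariant under the dilation x \<mapsto> k x by a positive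
  integer k: the dilated period covers k periods, compensated by the Jacobian 1/k.\<close>

lemma nn_integral_period_dilate:
  fixes f :: "real \<Rightarrow> ennreal"
  assumes [measurable]: "f \<in> borel_measurable borel" and per: "unit_periodic f" and k: "k \<ge> 1"
  shows "(\<integral>\<^sup>+x. indicator {0..<1} x * f (real k * x) \<partial>lborel)
       = (\<integral>\<^sup>+x. indicator {0..<1} x * f x \<partial>lborel)"
proof -
  have kpos: "real k > 0" using k by simp
  have "(\<integral>\<^sup>+x. indicator {0..<1} x * f (real k * x) \<partial>lborel)
     = ennreal \<bar>1 / real k\<bar> * (\<integral>\<^sup>+x. indicator {0..<1} (0 + (1 / real k) * x) * f (real k * (0 + (1 / real k) * x)) \<partial>lborel)"
    by (rule nn_integral_real_affine) (use kpos in auto)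
  also have "(\<integral>\<^sup>+x. indicator {0..<1} (0 + (1 / real k) * x) * f (real k * (0 + (1 / real k) * x)) \<partial>lborel)
      = (\<integral>\<^sup>+x. indicator {0..<real k} x * f x \<partial>lborel)"
    using kpos by (intro nn_integral_cong) (auto simp: indicator_def field_simps)
  also have "\<dots> = of_nat k * (\<integral>\<^sup>+x. indicator {0..<1} x * f x \<partial>lborel)"
    by (rule nn_integral_periods) fact+
  also have "ennreal \<bar>1 / real k\<bar> * (of_nat k * (\<integral>\<^sup>+x. indicator {0..<1} x * f x \<partial>lborel))
     = (ennreal (1 / real k) * of_nat k) * (\<integral>\<^sup>+x. indicator {0..<1} x * f x \<partial>lborel)"
    by (simp add: mult.assoc)
  also have "ennreal (1 / real k) * of_nat k = 1"
    using kpos by (simp add: ennreal_of_nat_eq_real_of_nat ennreal_mult[symmetric])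
  finally show ?thesis by simp
qed

lemma nn_integral_closed_unit_interval:
  fixes f :: "real \<Rightarrow> ennreal"
  shows "(\<integral>\<^sup>+x. indicator {0..1} x * f x \<partial>lborel) = (\<integral>\<^sup>+x. indicator {0..<1} x * f x \<partial>lborel)"
  by (intro nn_integral_cong_AE)
    (use AE_lborel_singleton[of "1::real"] in \<open>auto elim!: eventually_mono simp: indicator_def\<close>)


definition near_int :: "real \<Rightarrow> real \<Rightarrow> ennreal" where
  "near_int a t = indicator {t. dist_int t \<le> a} t"

lemma borel_measurable_near_int[measurable]: "near_int a \<in> borel_measurable borel"
  unfolding near_int_def by measurable

lemma near_int_shift: "near_int a (t + of_int n) = near_int a t"
  unfolding near_int_def by (simp add: dist_int_shift indicator_def)

lemma near_int_minus: "near_int a (- t) = near_int a t"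
  unfolding near_int_def by (simp add: dist_int_minus indicator_def)

lemma unit_periodic_near_int: "unit_periodic (near_int a)"
  unfolding unit_periodic_def using near_int_shift[of a _ 1] by simp

text \<open>For 0 \<le> a \<le> 1/2 the target covers the part [0,a] \<union> [1-a,1) of a period, of length 2a.\<close>

lemma nn_integral_near_int:
  assumes a0: "0 \<le> a" and a1: "a \<le> 1/2"
  shows "(\<integral>\<^sup>+\<gamma>. indicator {0..<1} \<gamma> * near_int a \<gamma> \<partial>lborel) = ennreal (2 * a)"
proof -
  have set: "{0..<1} \<inter> {t. dist_int t \<le> a} = {0..<1} - {a<..<1-a}"
  proof (intro set_eqI iffI)
    fix t assume t: "t \<in> {0..<1} \<inter> {t. dist_int t \<le> a}"
    then obtain n :: int where n: "\<bar>t - of_int n\<bar> \<le> a" by (auto simp: dist_int_le_iff)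
    have "of_int n > (-1::real)" "of_int n < (2::real)" using t n a1 by (auto simp: abs_le_iff)
    then have "n = 0 \<or> n = 1" by linarith
    then show "t \<in> {0..<1} - {a<..<1-a}" using t n by auto
  next
    fix t assume t: "t \<in> {0..<1} - {a<..<1-a}"
    then have "\<bar>t - of_int 0\<bar> \<le> a \<or> \<bar>t - of_int 1\<bar> \<le> a" by auto
    then show "t \<in> {0..<1} \<inter> {t. dist_int t \<le> a}" using t dist_int_le_iff by blast
  qed
  have "(\<integral>\<^sup>+\<gamma>. indicator {0..<1} \<gamma> * near_int a \<gamma> \<partial>lborel)
      = (\<integral>\<^sup>+\<gamma>. indicator ({0..<1} \<inter> {t. dist_int t \<le> a}) \<gamma> \<partial>lborel)"
    by (intro nn_integral_cong) (auto simp: near_int_def indicator_def)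
  also have "\<dots> = emeasure lborel ({0..<1} \<inter> {t. dist_int t \<le> a})"
    by simp
  also have "\<dots> = emeasure lborel {0..<(1::real)} - emeasure lborel {a<..<1-a}"
    unfolding set using a0 a1 by (intro emeasure_Diff) auto
  also have "\<dots> = ennreal 1 - ennreal (1 - a - a)"
    using a0 a1 by simp
  also have "\<dots> = ennreal (2 * a)"
    using a0 a1 by (subst ennreal_minus) auto
  finally show ?thesis .
qed

lemma nn_integral_near_int_translate:
  assumes "0 \<le> a" and "a \<le> 1/2"
  shows "(\<integral>\<^sup>+\<gamma>. indicator {0..1} \<gamma> * near_int a (c - \<gamma>) \<partial>lborel) = ennreal (2 * a)"
proof -
  have "(\<integral>\<^sup>+\<gamma>. indicator {0..1} \<gamma> * near_int a (c - \<gamma>) \<partial>lborel)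
      = (\<integral>\<^sup>+\<gamma>. indicator {0..<1} \<gamma> * near_int a (\<gamma> + (- c)) \<partial>lborel)"
    using near_int_minus[of a "\<gamma> - c" for \<gamma>] by (subst nn_integral_closed_unit_interval) simp
  also have "\<dots> = (\<integral>\<^sup>+\<gamma>. indicator {0..<1} \<gamma> * near_int a \<gamma> \<partial>lborel)"
    by (rule nn_integral_period_translate[OF borel_measurable_near_int unit_periodic_near_int])
  finally show ?thesis using nn_integral_near_int[OF assms] by simp
qed


definition target_correlation :: "real \<Rightarrow> real \<Rightarrow> real \<Rightarrow> ennreal" where
  "target_correlation a b t = (\<integral>\<^sup>+\<gamma>. indicator {0..<1} \<gamma> * (near_int a (\<gamma> + t) * near_int b \<gamma>) \<partial>lborel)"

lemma borel_measurable_target_correlation[measurable]: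
  "target_correlation a b \<in> borel_measurable borel"
  unfolding target_correlation_def by measurable

lemma unit_periodic_target_correlation: "unit_periodic (target_correlation a b)"
  unfolding unit_periodic_def target_correlation_def
  using near_int_shift[of a _ 1] by (simp add: add.assoc[symmetric])

lemma nn_integral_two_targets:
  "(\<integral>\<^sup>+\<gamma>. indicator {0..1} \<gamma> * (near_int a (u - \<gamma>) * near_int b (v - \<gamma>)) \<partial>lborel)
     = target_correlation a b (v - u)"
proof -
  define h where "h y = near_int a (y + (v - u)) * near_int b y" for y
  have hm[measurable]: "h \<in> borel_measurable borel" unfolding h_def by measurable
  have hp: "unit_periodic h"
    unfolding unit_periodic_def
  proof
    fix y
    have "near_int a (y + 1 + (v - u)) = near_int a ((y + (v - u)) + 1)" by (simp add: algebra_simps)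
    also have "\<dots> = near_int a (y + (v - u))" using near_int_shift[of a _ 1] by simp
    finally show "h (y + 1) = h y" using near_int_shift[of b y 1] by (simp add: h_def)
  qed
  have "near_int a (u - \<gamma>) * near_int b (v - \<gamma>) = h (\<gamma> + - v)" for \<gamma>
    using near_int_minus[of a "\<gamma> - u"] near_int_minus[of b "\<gamma> - v"] by (simp add: h_def)
  then have "(\<integral>\<^sup>+\<gamma>. indicator {0..1} \<gamma> * (near_int a (u - \<gamma>) * near_int b (v - \<gamma>)) \<partial>lborel)
      = (\<integral>\<^sup>+\<gamma>. indicator {0..<1} \<gamma> * h (\<gamma> + - v) \<partial>lborel)"
    by (simp add: nn_integral_closed_unit_interval)
  also have "\<dots> = (\<integral>\<^sup>+\<gamma>. indicator {0..<1} \<gamma> * h \<gamma> \<partial>lborel)"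
    by (rule nn_integral_period_translate[OF hm hp])
  finally show ?thesis by (simp add: h_def target_correlation_def)
qed

text \<open>Averaged over the translation t, the correlation factorizes (Tonelli plus translation
  invariance of the inner integral).\<close>

lemma nn_integral_target_correlation:
  assumes "0 \<le> a" "a \<le> 1/2" "0 \<le> b" "b \<le> 1/2"
  shows "(\<integral>\<^sup>+t. indicator {0..<1} t * target_correlation a b t \<partial>lborel)
       = ennreal (2 * a) * ennreal (2 * b)"
proof -
  have "(\<integral>\<^sup>+t. indicator {0..<1} t * target_correlation a b t \<partial>lborel)
      = (\<integral>\<^sup>+t. \<integral>\<^sup>+\<gamma>. indicator {0..<1} t * (indicator {0..<1} \<gamma> * (near_int a (\<gamma> + t) * near_int b \<gamma>)) \<partial>lborel \<partial>lborel)"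
    unfolding target_correlation_def by (intro nn_integral_cong nn_integral_cmult[symmetric]) measurable
  also have "\<dots> = (\<integral>\<^sup>+\<gamma>. \<integral>\<^sup>+t. indicator {0..<1} t * (indicator {0..<1} \<gamma> * (near_int a (\<gamma> + t) * near_int b \<gamma>)) \<partial>lborel \<partial>lborel)"
    by (rule lborel_pair.Fubini'[symmetric]) measurable
  also have "\<dots> = (\<integral>\<^sup>+\<gamma>. (indicator {0..<1} \<gamma> * near_int b \<gamma>) * (\<integral>\<^sup>+t. indicator {0..<1} t * near_int a (t + \<gamma>) \<partial>lborel) \<partial>lborel)"
    by (intro nn_integral_cong, subst nn_integral_cmult[symmetric]) (auto intro!: nn_integral_cong simp: ac_simps)
  also have "\<dots> = (\<integral>\<^sup>+\<gamma>. (indicator {0..<1} \<gamma> * near_int b \<gamma>) * ennreal (2 * a) \<partial>lborel)"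
    using nn_integral_period_translate[OF borel_measurable_near_int unit_periodic_near_int, of a]
      nn_integral_near_int[of a] assms
    by (intro nn_integral_cong) simp
  also have "\<dots> = (\<integral>\<^sup>+\<gamma>. indicator {0..<1} \<gamma> * near_int b \<gamma> \<partial>lborel) * ennreal (2 * a)"
    by (rule nn_integral_multc) measurable
  also have "\<dots> = ennreal (2 * a) * ennreal (2 * b)"
    using nn_integral_near_int[of b] assms by (simp add: mult.commute)
  finally show ?thesis .
qed


definition square_integral :: "(real \<times> real \<Rightarrow> ennreal) \<Rightarrow> ennreal" where
  "square_integral g =
     (\<integral>\<^sup>+x. indicator {0..1} x * (\<integral>\<^sup>+\<gamma>. indicator {0..1} \<gamma> * g (x, \<gamma>) \<partial>lborel) \<partial>lborel)"

lemma square_integral_one: "square_integral (\<lambda>z. 1) = 1"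
  unfolding square_integral_def by (simp add: nn_integral_multc)

lemma square_integral_target:
  assumes "0 \<le> a" "a \<le> 1/2"
  shows "square_integral (\<lambda>z. near_int a (c * fst z - snd z)) = ennreal (2 * a)"
  using assms by (simp add: square_integral_def nn_integral_near_int_translate nn_integral_multc)

text \<open>Two targets with distinct frequencies Q < R are independent: integrating first in \<gamma>
  leaves the correlation evaluated at (R - Q) x, whose average over x is unchanged by the
  dilation with the positive integer R - Q.\<close>

lemma square_integral_two_targets_less:
  fixes Q R :: nat
  assumes QR: "Q < R" and "0 \<le> a" "a \<le> 1/2" "0 \<le> b" "b \<le> 1/2"
  shows "square_integral (\<lambda>z. near_int a (real Q * fst z - snd z) * near_int b (real R * fst z - snd z))
       = ennreal (2 * a) * ennreal (2 * b)"
proof -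
  have "square_integral (\<lambda>z. near_int a (real Q * fst z - snd z) * near_int b (real R * fst z - snd z))
      = (\<integral>\<^sup>+x. indicator {0..<1} x * target_correlation a b (real (R - Q) * x) \<partial>lborel)"
    unfolding square_integral_def fst_conv snd_conv using QR
    by (subst nn_integral_closed_unit_interval, simp only: nn_integral_two_targets)
      (simp add: of_nat_diff algebra_simps)
  also have "\<dots> = (\<integral>\<^sup>+x. indicator {0..<1} x * target_correlation a b x \<partial>lborel)"
    by (rule nn_integral_period_dilate[OF borel_measurable_target_correlation
          unit_periodic_target_correlation]) (use QR in auto)
  finally show ?thesis using nn_integral_target_correlation assms by simp
qed

lemma square_integral_two_targets:
  fixes Q R :: nat
  assumes "Q \<noteq> R" and "0 \<le> a" "a \<le> 1/2" "0 \<le> b" "b \<le> 1/2"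
  shows "square_integral (\<lambda>z. near_int a (real Q * fst z - snd z) * near_int b (real R * fst z - snd z))
       = ennreal (2 * a) * ennreal (2 * b)"
proof (cases "Q < R")
  case True
  then show ?thesis using square_integral_two_targets_less assms by simp
next
  case False
  then have "R < Q" using assms by simp
  then show ?thesis using square_integral_two_targets_less[of R Q b a] assms
    by (simp add: mult.commute)
qed


definition unit_square :: "(real \<times> real) set" where
  "unit_square = {0..1} \<times> {0..1}"

lemma unit_square_closed[measurable]: "unit_square \<in> sets borel"
  unfolding unit_square_def by (intro borel_closed closed_Times) auto

lemma unit_square_Times_closed[measurable]:
  "unit_square \<times> unit_square \<in> sets (borel :: ((real \<times> real) \<times> (real \<times> real)) measure)"
  unfolding unit_square_def by (intro borel_closed closed_Times) auto

lemma emeasure_unit_square: "emeasure lborel unit_square = 1"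
proof -
  have "emeasure (lborel \<Otimes>\<^sub>M lborel) ({0..1::real} \<times> {0..1::real}) = 1"
    by (subst lborel.emeasure_pair_measure_Times) auto
  then show ?thesis by (simp add: lborel_prod unit_square_def)
qed

definition cube_space :: "((real \<times> real) \<times> (real \<times> real)) measure" where
  "cube_space = density lborel (indicator (unit_square \<times> unit_square))"

lemma sets_cube_space[simp, measurable_cong]: "sets cube_space = sets borel"
  unfolding cube_space_def by simp

lemma space_cube_space[simp]: "space cube_space = UNIV"
  unfolding cube_space_def by simp

lemma borel_measurable_fst_comp[measurable (raw)]:
  fixes f :: "'z \<Rightarrow> 'a::topological_space \<times> 'b::topological_space"
  assumes "f \<in> borel_measurable M"
  shows "(\<lambda>x. fst (f x)) \<in> borel_measurable M"
proof -
  have "fst \<in> borel_measurable (borel :: ('a \<times> 'b) measure)"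
    by (intro borel_measurable_continuous_onI continuous_intros)
  then show ?thesis using assms by (rule measurable_compose[rotated])
qed

lemma borel_measurable_snd_comp[measurable (raw)]:
  fixes f :: "'z \<Rightarrow> 'a::topological_space \<times> 'b::topological_space"
  assumes "f \<in> borel_measurable M"
  shows "(\<lambda>x. snd (f x)) \<in> borel_measurable M"
proof -
  have "snd \<in> borel_measurable (borel :: ('a \<times> 'b) measure)"
    by (intro borel_measurable_continuous_onI continuous_intros)
  then show ?thesis using assms by (rule measurable_compose[rotated])
qed

lemma nn_integral_lborel_pair:
  fixes F :: "'a::euclidean_space \<times> 'b::euclidean_space \<Rightarrow> ennreal"
  assumes "F \<in> borel_measurable borel"
  shows "(\<integral>\<^sup>+z. F z \<partial>lborel) = (\<integral>\<^sup>+a. \<integral>\<^sup>+b. F (a, b) \<partial>lborel \<partial>lborel)"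
proof -
  have "F \<in> borel_measurable (lborel \<Otimes>\<^sub>M lborel)" using assms by (simp add: lborel_prod)
  then show ?thesis using lborel.nn_integral_fst[of F] by (simp add: lborel_prod)
qed

lemma nn_integral_cube_space_product:
  fixes g h :: "real \<times> real \<Rightarrow> ennreal"
  assumes [measurable]: "g \<in> borel_measurable borel" "h \<in> borel_measurable borel"
  shows "(\<integral>\<^sup>+\<omega>. g (fst (fst \<omega>), fst (snd \<omega>)) * h (snd (fst \<omega>), snd (snd \<omega>)) \<partial>cube_space)
       = square_integral g * square_integral h"
proof -
  define i :: "real \<Rightarrow> ennreal" where "i = indicator {0..1}"
  have [measurable]: "i \<in> borel_measurable borel" unfolding i_def by measurable
  define G where "G x1 = (\<integral>\<^sup>+\<gamma>. i \<gamma> * g (x1, \<gamma>) \<partial>lborel)" for x1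
  define H where "H x2 = (\<integral>\<^sup>+\<gamma>. i \<gamma> * h (x2, \<gamma>) \<partial>lborel)" for x2
  have [measurable]: "G \<in> borel_measurable borel" "H \<in> borel_measurable borel"
    unfolding G_def H_def by measurable
  define F where "F x \<gamma> = indicator unit_square x * indicator unit_square \<gamma>
      * (g (fst x, fst \<gamma>) * h (snd x, snd \<gamma>))" for x \<gamma> :: "real \<times> real"
  have F_measurable[measurable]: "(\<lambda>\<omega>. F (fst \<omega>) (snd \<omega>)) \<in> borel_measurable borel"
    "\<And>x. F x \<in> borel_measurable borel" "(\<lambda>x. \<integral>\<^sup>+\<gamma>. F x \<gamma> \<partial>lborel) \<in> borel_measurable borel"
    unfolding F_def by measurable
  have inner: "(\<integral>\<^sup>+\<gamma>. F (x1, x2) \<gamma> \<partial>lborel) = (i x1 * G x1) * (i x2 * H x2)" for x1 x2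
  proof -
    have split: "F (x1, x2) (\<gamma>1, \<gamma>2) = (i x1 * i x2 * i \<gamma>1 * g (x1, \<gamma>1)) * (i \<gamma>2 * h (x2, \<gamma>2))"
      for \<gamma>1 \<gamma>2
      by (simp add: F_def i_def unit_square_def indicator_times ac_simps)
    have "(\<integral>\<^sup>+\<gamma>. F (x1, x2) \<gamma> \<partial>lborel)
        = (\<integral>\<^sup>+\<gamma>1. \<integral>\<^sup>+\<gamma>2. (i x1 * i x2 * i \<gamma>1 * g (x1, \<gamma>1)) * (i \<gamma>2 * h (x2, \<gamma>2)) \<partial>lborel \<partial>lborel)"
      by (subst nn_integral_lborel_pair) (simp_all add: split)
    also have "\<dots> = (\<integral>\<^sup>+\<gamma>1. (i \<gamma>1 * g (x1, \<gamma>1)) * (i x1 * i x2 * H x2) \<partial>lborel)"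
      unfolding H_def by (intro nn_integral_cong, subst nn_integral_cmult) (auto simp: ac_simps)
    also have "\<dots> = G x1 * (i x1 * i x2 * H x2)"
      unfolding G_def by (rule nn_integral_multc) measurable
    finally show ?thesis by (simp add: ac_simps)
  qed
  have "(\<integral>\<^sup>+\<omega>. g (fst (fst \<omega>), fst (snd \<omega>)) * h (snd (fst \<omega>), snd (snd \<omega>)) \<partial>cube_space)
      = (\<integral>\<^sup>+\<omega>. F (fst \<omega>) (snd \<omega>) \<partial>lborel)"
    unfolding cube_space_def by (subst nn_integral_density) (auto simp: F_def indicator_times mult.assoc)
  also have "\<dots> = (\<integral>\<^sup>+x. \<integral>\<^sup>+\<gamma>. F x \<gamma> \<partial>lborel \<partial>lborel)"
    using nn_integral_lborel_pair[OF F_measurable(1)] by simp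
  also have "\<dots> = (\<integral>\<^sup>+x1. \<integral>\<^sup>+x2. (i x1 * G x1) * (i x2 * H x2) \<partial>lborel \<partial>lborel)"
    using nn_integral_lborel_pair[OF F_measurable(3)] by (simp only: inner)
  also have "\<dots> = (\<integral>\<^sup>+x1. (i x1 * G x1) * square_integral h \<partial>lborel)"
    unfolding square_integral_def H_def i_def by (intro nn_integral_cong nn_integral_cmult) measurable
  also have "\<dots> = square_integral g * square_integral h"
    unfolding square_integral_def G_def i_def by (rule nn_integral_multc) measurable
  finally show ?thesis .
qed

lemma emeasure_cube_space_product:
  fixes g h :: "real \<times> real \<Rightarrow> ennreal"
  assumes "g \<in> borel_measurable borel" "h \<in> borel_measurable borel" and "S \<in> sets borel"
    and "\<And>\<omega>. indicator S \<omega> = g (fst (fst \<omega>), fst (snd \<omega>)) * h (snd (fst \<omega>), snd (snd \<omega>))"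
  shows "emeasure cube_space S = square_integral g * square_integral h"
  using assms nn_integral_cube_space_product[of g h] by (simp flip: nn_integral_indicator)

lemma prob_space_cube_space: "prob_space cube_space"
  using emeasure_cube_space_product[of "\<lambda>z. 1" "\<lambda>z. 1" UNIV]
  by (intro prob_spaceI) (simp add: square_integral_one)


definition hit_event :: "real \<Rightarrow> real \<Rightarrow> real \<Rightarrow> ((real \<times> real) \<times> (real \<times> real)) set" where
  "hit_event q a b = {\<omega>. dist_int (q * fst (fst \<omega>) - fst (snd \<omega>)) \<le> a
                        \<and> dist_int (q * snd (fst \<omega>) - snd (snd \<omega>)) \<le> b}"

lemma hit_event_borel[measurable]: "hit_event q a b \<in> sets borel"
proof -
  have "hit_event q a b = {\<omega> \<in> space borel. dist_int (q * fst (fst \<omega>) - fst (snd \<omega>)) \<le> a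
                        \<and> dist_int (q * snd (fst \<omega>) - snd (snd \<omega>)) \<le> b}"
    by (simp add: hit_event_def)
  also have "\<dots> \<in> sets borel" by measurable
  finally show ?thesis .
qed

lemma indicator_hit_event:
  "indicator (hit_event q a b) \<omega>
     = near_int a (q * fst (fst \<omega>) - fst (snd \<omega>)) * near_int b (q * snd (fst \<omega>) - snd (snd \<omega>))"
  by (simp add: hit_event_def near_int_def indicator_def)

lemma measure_hit_event:
  assumes "0 \<le> a" "a \<le> 1/2" "0 \<le> b" "b \<le> 1/2"
  shows "measure cube_space (hit_event q a b) = (2 * a) * (2 * b)"
proof -
  have "emeasure cube_space (hit_event q a b)
      = square_integral (\<lambda>z. near_int a (q * fst z - snd z)) * square_integral (\<lambda>z. near_int b (q * fst z - snd z))"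
    by (rule emeasure_cube_space_product) (simp_all add: indicator_hit_event)
  also have "\<dots> = ennreal (2 * a) * ennreal (2 * b)"
    using assms by (simp only: square_integral_target)
  also have "\<dots> = ennreal ((2 * a) * (2 * b))"
    using assms by (subst ennreal_mult) simp_all
  finally show ?thesis using assms by (simp add: measure_def)
qed

lemma measure_hit_event_Int:
  fixes Q R :: nat
  assumes "Q \<noteq> R" and "0 \<le> a" "a \<le> 1/2" "0 \<le> b" "b \<le> 1/2"
    and "0 \<le> c" "c \<le> 1/2" "0 \<le> d" "d \<le> 1/2"
  shows "measure cube_space (hit_event Q a b \<inter> hit_event R c d) = ((2 * a) * (2 * b)) * ((2 * c) * (2 * d))"
proof -
  have "emeasure cube_space (hit_event Q a b \<inter> hit_event R c d)
      = square_integral (\<lambda>z. near_int a (real Q * fst z - snd z) * near_int c (real R * fst z - snd z))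
      * square_integral (\<lambda>z. near_int b (real Q * fst z - snd z) * near_int d (real R * fst z - snd z))"
    by (rule emeasure_cube_space_product) (simp_all add: indicator_inter_arith indicator_hit_event ac_simps)
  also have "\<dots> = (ennreal (2 * a) * ennreal (2 * c)) * (ennreal (2 * b) * ennreal (2 * d))"
    by (simp only: square_integral_two_targets[OF assms(1,2,3,6,7)]
        square_integral_two_targets[OF assms(1,4,5,8,9)])
  also have "\<dots> = ennreal (((2 * a) * (2 * b)) * ((2 * c) * (2 * d)))"
    using assms by (simp add: ennreal_mult[symmetric] ac_simps)
  finally show ?thesis using assms by (simp add: measure_def)
qed


text \<open>Let S be the number of events that occur
  and U their union; V bounds E[S^2] = \<Sum>\<Sum> P(A q \<inter> A r).  Expanding E[(S - c 1_U)^2] \<ge> 0 gives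
  a quadratic inequality in the real parameter c.\<close>

lemma (in prob_space) second_moment_quadratic:
  fixes A :: "nat \<Rightarrow> 'a set" and F :: "nat set"
  assumes fin: "finite F" and ev: "\<And>q. A q \<in> events"
    and V: "(\<Sum>q\<in>F. \<Sum>r\<in>F. prob (A q \<inter> A r)) \<le> V"
  shows "0 \<le> V - 2 * c * (\<Sum>q\<in>F. prob (A q)) + c\<^sup>2 * prob (\<Union>q\<in>F. A q)"
proof -
  have int_ind: "\<And>B. B \<in> events \<Longrightarrow> integrable M (indicator B :: 'a \<Rightarrow> real)"
    by (intro integrable_real_indicator) (auto simp: emeasure_eq_measure)
  define T where "T = (\<Sum>q\<in>F. prob (A q))"
  define U where "U = (\<Union>q\<in>F. A q)"
  have U_ev: "U \<in> events" unfolding U_def using fin ev by auto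
  define S where "S \<omega> = (\<Sum>q\<in>F. indicator (A q) \<omega> :: real)" for \<omega>
  define S2 where "S2 \<omega> = (\<Sum>q\<in>F. \<Sum>r\<in>F. indicator (A q \<inter> A r) \<omega> :: real)" for \<omega>
  have int_S: "integrable M S" unfolding S_def using ev by (auto intro!: int_ind)
  have int_S2: "integrable M S2"
    unfolding S2_def using ev by (intro Bochner_Integration.integrable_sum) (auto intro!: int_ind)
  have int_U: "integrable M (indicator U :: 'a \<Rightarrow> real)" using U_ev by (rule int_ind)
  have E_S: "integral\<^sup>L M S = T"
    unfolding S_def T_def using ev
    by (subst Bochner_Integration.integral_sum) (auto intro!: int_ind simp: Bochner_Integration.integral_indicator)
  have E_S2: "integral\<^sup>L M S2 \<le> V"
    unfolding S2_def using ev int_ind V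
    by (simp add: Bochner_Integration.integral_sum Bochner_Integration.integral_indicator Int_absorb2 sets.Int)
  have E_U: "integral\<^sup>L M (indicator U :: 'a \<Rightarrow> real) = prob U"
    using U_ev by (simp add: Bochner_Integration.integral_indicator Int_absorb2)
  text \<open>S^2 = S2 and S vanishes outside U, so (S - c 1_U)^2 = S2 - 2 c S + c^2 1_U.\<close>
  have square: "(S \<omega> - c * indicator U \<omega>)\<^sup>2 = S2 \<omega> - 2 * c * S \<omega> + c\<^sup>2 * indicator U \<omega>" for c \<omega>
  proof -
    have "(S \<omega>)\<^sup>2 = S2 \<omega>"
      unfolding S_def S2_def power2_eq_square sum_product by (simp add: indicator_inter_arith)
    moreover have "S \<omega> * indicator U \<omega> = S \<omega>"
      unfolding S_def U_def by (auto simp: indicator_def intro!: sum.neutral)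
    moreover have "(indicator U \<omega> :: real)\<^sup>2 = indicator U \<omega>" by (simp add: indicator_def)
    ultimately show ?thesis by (simp add: power2_diff algebra_simps)
  qed
  have "0 \<le> (\<integral>\<omega>. (S \<omega> - c * indicator U \<omega>)\<^sup>2 \<partial>M)" by (intro integral_nonneg_AE) auto
  also have "\<dots> = integral\<^sup>L M S2 - 2 * c * T + c\<^sup>2 * prob U"
    using int_S int_S2 int_U E_S E_U by (simp add: square)
  finally show ?thesis using E_S2 unfolding T_def U_def by linarith
qed

text \<open>The second-moment bound (Chung-Erdos): E[S]^2 \<le> E[S^2] \<sqdot> P(S > 0), obtained from the
  quadratic inequality at its minimizing c.\<close>

lemma (in prob_space) second_moment_union_bound:
  fixes A :: "nat \<Rightarrow> 'a set" and F :: "nat set"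
  assumes "finite F" and "\<And>q. A q \<in> events"
    and "(\<Sum>q\<in>F. \<Sum>r\<in>F. prob (A q \<inter> A r)) \<le> V"
  shows "(\<Sum>q\<in>F. prob (A q))\<^sup>2 \<le> V * prob (\<Union>q\<in>F. A q)"
proof -
  define T where "T = (\<Sum>q\<in>F. prob (A q))"
  define U where "U = (\<Union>q\<in>F. A q)"
  have quadratic: "0 \<le> V - 2 * c * T + c\<^sup>2 * prob U" for c
    unfolding T_def U_def using assms by (rule second_moment_quadratic)
  show ?thesis
  proof (cases "prob U = 0")
    case True
    text \<open>Then the quadratic is linear in c and non-negative only if its slope T vanishes.\<close>
    have "T = 0"
    proof (rule ccontr)
      assume "T \<noteq> 0"
      then show False using quadratic[of "(V + 1) / (2 * T)"] True by (simp add: field_simps)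
    qed
    then show ?thesis using True by (simp add: T_def U_def)
  next
    case False
    then have "prob U > 0" by (simp add: order_less_le)
    then show ?thesis
      using quadratic[of "T / prob U"] by (simp add: T_def U_def field_simps power2_eq_square)
  qed
qed

text \<open>Second Borel-Cantelli lemma for pairwise independent events with divergent sum of
  probabilities p q: every tail union has probability 1, since by the second-moment bound a
  finite block with probability sum T covers probability at least T / (T + 1).\<close>

lemma (in prob_space) prob_tail_union_pairwise_independent:
  fixes A :: "nat \<Rightarrow> 'a set" and p :: "nat \<Rightarrow> real"
  assumes ev: "\<And>q. A q \<in> events" and pq: "\<And>q. prob (A q) = p q"
    and pqr: "\<And>q r. q \<noteq> r \<Longrightarrow> prob (A q \<inter> A r) = p q * p r"
    and ns: "\<not> summable p"
  shows "prob (\<Union>q\<in>{m..}. A q) = 1"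
proof (rule ccontr)
  define P where "P = prob (\<Union>q\<in>{m..}. A q)"
  assume "prob (\<Union>q\<in>{m..}. A q) \<noteq> 1"
  then have P1: "P < 1" using prob_le_1 unfolding P_def by (simp add: order_less_le)
  have p0: "0 \<le> p q" for q using pq[of q] by (metis measure_nonneg)
  have "\<not> summable (\<lambda>k. p (k + m))" using ns summable_iff_shift[of p m] by simp
  then obtain n where n: "(\<Sum>k<n. p (k + m)) > P / (1 - P)"
    using summableI_nonneg_bounded[of "\<lambda>k. p (k + m)"] p0 by (meson not_le)
  define F where "F = {m..<m+n}"
  define T where "T = (\<Sum>q\<in>F. p q)"
  have "T = (\<Sum>k<n. p (k + m))"
    unfolding T_def F_def using sum.shift_bounds_nat_ivl[of p 0 m n] by (simp add: lessThan_atLeast0 add.commute)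
  with n P1 have TP: "T * (1 - P) > P" by (simp add: field_simps)
  have P0: "0 \<le> P" unfolding P_def by simp
  with TP have "T * (1 - P) > 0" by linarith
  with P1 have T_pos: "T > 0" by (simp add: zero_less_mult_iff)
  text \<open>The diagonal terms contribute T, the off-diagonal ones at most T^2.\<close>
  have "(\<Sum>q\<in>F. \<Sum>r\<in>F. prob (A q \<inter> A r)) \<le> (\<Sum>q\<in>F. \<Sum>r\<in>F. p q * p r + (if q = r then p q else 0))"
    using pq pqr p0 by (intro sum_mono) (simp add: add_nonneg_nonneg mult_nonneg_nonneg)
  also have "\<dots> = T\<^sup>2 + T"
    unfolding T_def by (simp add: sum.distrib sum_product F_def power2_eq_square)
  finally have "T\<^sup>2 \<le> (T\<^sup>2 + T) * prob (\<Union>q\<in>F. A q)"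
    using second_moment_union_bound[OF _ ev] pq by (simp add: F_def T_def)
  also have "\<dots> \<le> (T\<^sup>2 + T) * P"
    unfolding P_def F_def using ev T_pos by (intro mult_left_mono finite_measure_mono) auto
  finally have "T * T \<le> T * ((T + 1) * P)" by (simp add: power2_eq_square algebra_simps)
  then have "T \<le> (T + 1) * P" using T_pos by (rule mult_left_le_imp_le)
  with TP show False by (simp add: algebra_simps)
qed

lemma (in prob_space) AE_infinitely_often_pairwise_independent:
  fixes A :: "nat \<Rightarrow> 'a set" and p :: "nat \<Rightarrow> real"
  assumes "\<And>q. A q \<in> events" and "\<And>q. prob (A q) = p q"
    and "\<And>q r. q \<noteq> r \<Longrightarrow> prob (A q \<inter> A r) = p q * p r"
    and "\<not> summable p"
  shows "AE \<omega> in M. \<exists>\<^sub>\<infinity>q. \<omega> \<in> A q"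
proof -
  have "AE \<omega> in M. \<forall>m. \<omega> \<in> (\<Union>q\<in>{m..}. A q)"
    using AE_prob_1[OF prob_tail_union_pairwise_independent[OF assms]] by (simp add: AE_all_countable)
  then show ?thesis by (auto simp: INFM_nat_le elim!: eventually_mono)
qed


lemma min_one_le_target_area:
  fixes p i j :: real
  assumes p: "0 < p" and i: "0 \<le> i" and j: "0 \<le> j" and ij: "i + j = 1"
  shows "min 1 p \<le> (2 * min (1/2) (p powr i)) * (2 * min (1/2) (p powr j))"
proof (cases "p \<ge> 1")
  case True
  then have "p powr i \<ge> 1" "p powr j \<ge> 1" using i j by (auto intro: ge_one_powr_ge_zero)
  then show ?thesis by simp
next
  case False
  define X where "X = p powr i"
  define Y where "Y = p powr j"
  have XY: "X * Y = p" unfolding X_def Y_def using p ij by (simp add: powr_add[symmetric])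
  have "X \<ge> p" "Y \<ge> p" unfolding X_def Y_def using powr_mono'[of _ 1 p] i j ij p False by auto
  moreover have "X > 0" "Y > 0" unfolding X_def Y_def using p by auto
  moreover have "X \<le> 1" "Y \<le> 1" unfolding X_def Y_def using powr_le1 p False i j by auto
  ultimately show ?thesis using XY False p
    by (simp add: X_def[symmetric] Y_def[symmetric] min_def mult_le_cancel_left1 mult_le_cancel_right1)
qed

lemma not_summable_target_areas:
  fixes \<psi> :: "nat \<Rightarrow> real"
  assumes "0 \<le> i" "0 \<le> j" "i + j = 1" and pos: "\<And>n. n \<ge> 1 \<Longrightarrow> \<psi> n > 0" and ns: "\<not> summable \<psi>"
  shows "\<not> summable (\<lambda>q. (2 * min (1/2) (\<psi> (Suc q) powr i)) * (2 * min (1/2) (\<psi> (Suc q) powr j)))"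
proof
  assume s: "summable (\<lambda>q. (2 * min (1/2) (\<psi> (Suc q) powr i)) * (2 * min (1/2) (\<psi> (Suc q) powr j)))"
  have "summable (\<lambda>q. min 1 (\<psi> (Suc q)))"
  proof (rule summable_comparison_test'[OF s])
    fix n :: nat
    have "\<psi> (Suc n) > 0" using pos by simp
    then show "norm (min 1 (\<psi> (Suc n)))
        \<le> (2 * min (1/2) (\<psi> (Suc n) powr i)) * (2 * min (1/2) (\<psi> (Suc n) powr j))"
      using min_one_le_target_area[of "\<psi> (Suc n)" i j] assms(1-3) by simp
  qed
  then have "(\<lambda>q. min 1 (\<psi> (Suc q))) \<longlonglongrightarrow> 0" by (rule summable_LIMSEQ_zero)
  then have "eventually (\<lambda>q. min 1 (\<psi> (Suc q)) < 1) sequentially"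
    by (rule order_tendstoD) simp
  then have "eventually (\<lambda>q. min 1 (\<psi> (Suc q)) = \<psi> (Suc q)) sequentially"
    by eventually_elim (auto simp: min_def)
  then have "summable (\<lambda>q. \<psi> (Suc q))"
    using \<open>summable (\<lambda>q. min 1 (\<psi> (Suc q)))\<close> summable_cong by fastforce
  with ns show False using summable_iff_shift[of \<psi> 1] by simp
qed

lemma wpow_le:
  assumes i: "0 \<le> i" and ps: "0 < p" and d: "dist_int t \<le> p powr i"
  shows "wpow t i \<le> p"
proof (cases "i = 0")
  case True then show ?thesis using ps by (simp add: wpow_def)
next
  case False
  then have "dist_int t powr (1 / i) \<le> (p powr i) powr (1 / i)"
    using i d by (intro powr_mono2) (auto simp: dist_int_nonneg)
  also have "\<dots> = p" using False ps by (simp add: powr_powr)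
  finally show ?thesis using False by (simp add: wpow_def)
qed

lemma in_W_set_if_hit_infinitely_often:
  fixes \<psi> :: "nat \<Rightarrow> real" and x \<gamma> :: "real \<times> real"
  assumes i: "0 \<le> i" and j: "0 \<le> j" and pos: "\<And>n. n \<ge> 1 \<Longrightarrow> \<psi> n > 0"
    and \<gamma>: "\<gamma> \<in> unit_square"
    and hits: "\<exists>\<^sub>\<infinity>q. (x, \<gamma>) \<in> hit_event (real (Suc q)) (min (1/2) (\<psi> (Suc q) powr i))
                                                 (min (1/2) (\<psi> (Suc q) powr j))"
  shows "\<gamma> \<in> W_set x i j \<psi>"
proof -
  define Z where "Z = {q :: int. q \<noteq> 0 \<and>
       max (wpow (of_int q * fst x - fst \<gamma>) i) (wpow (of_int q * snd x - snd \<gamma>) j) \<le> \<psi> (nat \<bar>q\<bar>)}"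
  define H where "H = {q. (x, \<gamma>) \<in> hit_event (real (Suc q)) (min (1/2) (\<psi> (Suc q) powr i))
                                                 (min (1/2) (\<psi> (Suc q) powr j))}"
  have "(\<lambda>q. int (Suc q)) ` H \<subseteq> Z"
  proof
    fix z assume "z \<in> (\<lambda>q. int (Suc q)) ` H"
    then obtain q where q: "q \<in> H" and z: "z = int (Suc q)" by auto
    have ps: "\<psi> (Suc q) > 0" using pos by simp
    have "wpow (real (Suc q) * fst x - fst \<gamma>) i \<le> \<psi> (Suc q)"
      using q i ps by (intro wpow_le) (auto simp: H_def hit_event_def)
    moreover have "wpow (real (Suc q) * snd x - snd \<gamma>) j \<le> \<psi> (Suc q)"
      using q j ps by (intro wpow_le) (auto simp: H_def hit_event_def)
    moreover have "nat (1 + int q) = Suc q" by arith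
    ultimately show "z \<in> Z" unfolding Z_def z by simp
  qed
  moreover have "infinite ((\<lambda>q. int (Suc q)) ` H)"
    using hits by (auto simp: H_def Inf_many_def dest: finite_imageD[OF _ inj_onI])
  ultimately have "infinite Z" using finite_subset by blast
  then show ?thesis using \<gamma> unfolding W_set_def Z_def unit_square_def by simp
qed

lemma null_set_of_non_full_fibres:
  fixes P :: "(real \<times> real) \<times> (real \<times> real) \<Rightarrow> bool"
  assumes ae: "AE \<omega> in cube_space. P \<omega>"
    and P: "\<And>x \<gamma>. \<gamma> \<in> unit_square \<Longrightarrow> P (x, \<gamma>) \<Longrightarrow> \<gamma> \<in> W x"
    and W: "\<And>x. W x \<subseteq> unit_square"
  shows "{x \<in> unit_square. emeasure lebesgue (W x) \<noteq> 1} \<in> null_sets lebesgue"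
proof -
  have "AE \<omega> in lborel. \<omega> \<in> unit_square \<times> unit_square \<longrightarrow> P \<omega>"
    using ae unfolding cube_space_def by (subst (asm) AE_density) (auto simp: indicator_def)
  then have "AE \<omega> in lborel \<Otimes>\<^sub>M lborel. \<omega> \<in> unit_square \<times> unit_square \<longrightarrow> P \<omega>"
    by (subst lborel_prod)
  then have "AE x in lborel. AE \<gamma> in lborel. (x, \<gamma>) \<in> unit_square \<times> unit_square \<longrightarrow> P (x, \<gamma>)"
    by (rule lborel_pair.AE_pair)
  then have "AE x in lborel. x \<in> unit_square \<longrightarrow> (AE \<gamma> in lborel. \<gamma> \<notin> unit_square - W x)"
    by eventually_elim (auto elim!: eventually_mono dest: P)
  then have "AE x in lborel. x \<in> unit_square \<longrightarrow> unit_square - W x \<in> null_sets lebesgue"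
    by eventually_elim (auto simp: eventually_ae_filter null_sets_completion_iff2)
  moreover have "emeasure lebesgue (W x) = 1" if "unit_square - W x \<in> null_sets lebesgue" for x
  proof -
    have "emeasure lebesgue (unit_square - (unit_square - W x)) = emeasure lebesgue unit_square"
      by (intro emeasure_Diff_null_set that) simp
    moreover have "unit_square - (unit_square - W x) = W x" using W[of x] by blast
    ultimately show ?thesis using emeasure_unit_square by simp
  qed
  ultimately have "AE x in lborel. x \<in> unit_square \<longrightarrow> emeasure lebesgue (W x) = 1"
    by (auto elim!: eventually_mono)
  then obtain N where N: "N \<in> null_sets lborel"
    and sub: "{x. \<not> (x \<in> unit_square \<longrightarrow> emeasure lebesgue (W x) = 1)} \<subseteq> N"
    by (auto simp: eventually_ae_filter)
  show ?thesis
    using sub by (intro null_sets_completion_subset[OF _ null_sets_completionI[OF N]]) auto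
qed


text \<open>The events A q of hitting the targets of radii a q = min(1/2, \<psi>(q+1)^i) and
  b q = min(1/2, \<psi>(q+1)^j) at frequency q + 1 are pairwise independent with divergent sum of
  probabilities, so almost every (x, \<gamma>) hits infinitely often, and Fubini concludes.\<close>

theorem theorem1p1:
  fixes i j :: real and \<psi> :: "nat \<Rightarrow> real"
  assumes "i \<ge> 0" and "j \<ge> 0" and "i + j = 1"
    and "approx_fun \<psi>"
    and "\<not> summable \<psi>"
  shows "{x \<in> {0..1} \<times> {0..1}. irrational_vec x \<and> emeasure lebesgue (W_set x i j \<psi>) \<noteq> 1}
           \<in> null_sets lebesgue"
proof -
  have pos: "\<And>n. n \<ge> 1 \<Longrightarrow> \<psi> n > 0" using assms(4) by (simp add: approx_fun_def)
  define a where "a q = min (1/2) (\<psi> (Suc q) powr i)" for q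
  define b where "b q = min (1/2) (\<psi> (Suc q) powr j)" for q
  define A where "A q = hit_event (real (Suc q)) (a q) (b q)" for q
  have radii: "0 \<le> a q" "a q \<le> 1/2" "0 \<le> b q" "b q \<le> 1/2" for q
    unfolding a_def b_def by auto
  interpret cube: prob_space cube_space by (rule prob_space_cube_space)
  have "AE \<omega> in cube_space. \<exists>\<^sub>\<infinity>q. \<omega> \<in> A q"
  proof (rule cube.AE_infinitely_often_pairwise_independent)
    show "cube.prob (A q) = (2 * a q) * (2 * b q)" for q
      unfolding A_def using radii by (rule measure_hit_event)
    show "cube.prob (A q \<inter> A r) = ((2 * a q) * (2 * b q)) * ((2 * a r) * (2 * b r))" if "q \<noteq> r" for q r
      unfolding A_def by (rule measure_hit_event_Int) (use that radii in auto)
    show "\<not> summable (\<lambda>q. (2 * a q) * (2 * b q))"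
      unfolding a_def b_def using not_summable_target_areas[OF assms(1-3) pos assms(5)] .
  qed (simp add: A_def)
  then have "{x \<in> unit_square. emeasure lebesgue (W_set x i j \<psi>) \<noteq> 1} \<in> null_sets lebesgue"
  proof (rule null_set_of_non_full_fibres)
    show "\<gamma> \<in> W_set x i j \<psi>"
      if "\<gamma> \<in> unit_square" "\<exists>\<^sub>\<infinity>q. (x, \<gamma>) \<in> A q" for x \<gamma>
      by (rule in_W_set_if_hit_infinitely_often)
        (use assms(1,2) pos that in \<open>simp_all add: A_def a_def b_def\<close>)
    show "W_set x i j \<psi> \<subseteq> unit_square" for x
      by (auto simp: W_set_def unit_square_def)
  qed
  then show ?thesis
    by (rule null_sets_completion_subset[rotated]) (auto simp: unit_square_def)
qed

end
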